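(* The Lie algebra of the Lie group $(\delta+\mathbb{K}^m_{LC}\langle\langle X\rangle\rangle,\circ,\delta)$ (Silva topology) is $\mathbb{K}^m_{LC}\langle\langle X\rangle\rangle$ with Lie bracket $[c,d]=c\lhd d-d\lhd c$.
   Context: $\mathbb{K}\in\{\mathbb{R},\mathbb{C}\}$. $X=\{x_0,x_1,\ldots,x_m\}$ is a finite alphabet, $X^\ast$ its words (including $\emptyset$), $|\eta|$ the length. For series $c\colon X^\ast\to\mathbb{K}^m$ and $M>0$, $\|c\|_{\ell_\infty,M}=\sup_\eta|(c,\eta)|/(M^{|\eta|}|\eta|!)$; $\mathbb{K}^m_{LC}\langle\langle X\rangle\rangle$ is the union over $M>0$ of the Banach spaces $\{c:\|c\|_{\ell_\infty,M}<\infty\}$ with the Silva topology (locally convex inductive limit); $d[i]$ is the $i$-th component of $d$. $\delta+\mathbb{K}^m_{LC}\langle\langle X\rangle\rangle=\{\delta+c\}$, $\delta$ a formal symbol. The shuffle product $\sqcup\!\sqcup$ is determined on words by $(x_i\eta)\sqcup\!\sqcup(x_j\xi)=x_i(\eta\sqcup\!\sqcup(x_j\xi))+x_j((x_i\eta)\sqcup\!\sqcup\xi)$, $\eta\sqcup\!\sqcup\emptyset=\emptyset\sqcup\!\sqcup\eta=\eta$. Mixed composition: with $d[0]:=0$, $\phi_d(\emptyset)=\mathrm{id}$, $\phi_d(x_i\eta)=\phi_d(x_i)\circ\phi_d(\eta)$, $\phi_d(x_i)(e)=x_ie+x_0(d[i]\sqcup\!\sqcup e)$, $c\,\tilde\circ\,d_\delta=\sum_\eta(c,\eta)\phi_d(\eta)(1\cdot\emptyset)$;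 group product $(\delta+c)\circ(\delta+d)=\delta+d+c\,\tilde\circ\,d_\delta$, identity $\delta$; this is an analytic Lie group for the Silva topology. Pre-Lie product: $c\lhd d=\sum_\eta(c,\eta)\,\eta\lhd d$ with $\emptyset\lhd d=0$, $(x_0\eta)\lhd d=x_0(\eta\lhd d)$, $(x_j\eta)\lhd d=x_j(\eta\lhd d)+x_0(\eta\sqcup\!\sqcup d[j])$, $j=1,\ldots,m$. The Lie algebra is $T_\delta$ of the group with bracket obtained by evaluating at $\delta$ the bracket of left-invariant vector fields. *)

theory Defs
  imports Complex_Main "HOL-Library.Function_Algebras"
begin

text \<open>Letters x_0,...,x_m are the naturals 0..m; words are nat lists.
  A scalar series is a map nat list => K; a K^m-valued series is a map
  nat list => nat => K, where the second argument i in {1..m} selects the component.\<close>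

type_synonym 'a sser = "nat list \<Rightarrow> 'a"
type_synonym 'a vser = "nat list \<Rightarrow> nat \<Rightarrow> 'a"

fun wsh :: "nat list \<Rightarrow> nat list \<Rightarrow> nat list list" where
  "wsh [] v = [v]"
| "wsh u [] = [u]"
| "wsh (a # u) (b # v) = map ((#) a) (wsh u (b # v)) @ map ((#) b) (wsh (a # u) v)"

text \<open>Bilinear extension of the word shuffle (wsh lists the words of u shuffle v with
  multiplicity); only words u, v with letters from w and length at most |w| can contribute.\<close>
definition ssh :: "'a::comm_ring_1 sser \<Rightarrow> 'a sser \<Rightarrow> 'a sser" where
  "ssh a b w = (\<Sum>u\<in>{u. set u \<subseteq> set w \<and> length u \<le> length w}.
                 \<Sum>v\<in>{v. set v \<subseteq> set w \<and> length v \<le> length w}.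
                   a u * b v * of_nat (count_list (wsh u v) w))"

definition pre :: "nat \<Rightarrow> 'a::zero sser \<Rightarrow> 'a sser" where
  "pre i e w = (case w of [] \<Rightarrow> 0 | a # w' \<Rightarrow> (if a = i then e w' else 0))"

definition chr :: "nat list \<Rightarrow> 'a::{zero,one} sser" where
  "chr \<eta> w = (if w = \<eta> then 1 else 0)"

definition comp :: "nat \<Rightarrow> 'a::zero vser \<Rightarrow> 'a sser" where
  "comp j d w = (if j = 0 then 0 else d w j)"

definition smul :: "'a::times \<Rightarrow> 'a vser \<Rightarrow> 'a vser" where
  "smul t c = (\<lambda>w i. t * c w i)"

definition phi1 :: "'a::comm_ring_1 vser \<Rightarrow> nat \<Rightarrow> 'a sser \<Rightarrow> 'a sser" where
  "phi1 d i e = (\<lambda>w. pre i e w + pre 0 (ssh (comp i d) e) w)"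

fun phiw :: "'a::comm_ring_1 vser \<Rightarrow> nat list \<Rightarrow> 'a sser \<Rightarrow> 'a sser" where
  "phiw d [] e = e"
| "phiw d (i # \<eta>) e = phi1 d i (phiw d \<eta> e)"

text \<open>c mixed-composed with d_delta; the formal sum over eta is locally finite: phi_d(eta)(1)
  only contains words of length at least |eta|.\<close>
definition mixcomp :: "nat \<Rightarrow> 'a::comm_ring_1 vser \<Rightarrow> 'a vser \<Rightarrow> 'a vser" where
  "mixcomp m c d = (\<lambda>w j. \<Sum>\<eta>\<in>{\<eta>. set \<eta> \<subseteq> {0..m} \<and> length \<eta> \<le> length w}.
                       c \<eta> j * phiw d \<eta> (chr []) w)"

text \<open>Group product in the global chart delta + c |-> c:
  (delta + c) o (delta + d) = delta + (d + c mixcomp d_delta).\<close>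
definition gprod :: "nat \<Rightarrow> 'a::comm_ring_1 vser \<Rightarrow> 'a vser \<Rightarrow> 'a vser" where
  "gprod m c d = d + mixcomp m c d"

fun wpl :: "'a::comm_ring_1 vser \<Rightarrow> nat list \<Rightarrow> 'a sser" where
  "wpl d [] = (\<lambda>w. 0)"
| "wpl d (j # \<eta>) = (\<lambda>w. pre j (wpl d \<eta>) w
                        + (if j = 0 then 0 else pre 0 (ssh (chr \<eta>) (comp j d)) w))"

definition prelie :: "nat \<Rightarrow> 'a::comm_ring_1 vser \<Rightarrow> 'a vser \<Rightarrow> 'a vser" where
  "prelie m c d = (\<lambda>w k. \<Sum>\<eta>\<in>{\<eta>. set \<eta> \<subseteq> {0..m} \<and> length \<eta> \<le> length w}.
                       c \<eta> k * wpl d \<eta> w)"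

definition ser :: "nat \<Rightarrow> 'a::zero vser set" where
  "ser m = {c. \<forall>w i. (\<not> set w \<subseteq> {0..m} \<or> i \<notin> {1..m}) \<longrightarrow> c w i = 0}"

definition growth_bdd :: "real \<Rightarrow> 'a::real_normed_field vser \<Rightarrow> bool" where
  "growth_bdd M c \<longleftrightarrow> (\<exists>B. \<forall>w i. norm (c w i) \<le> B * M ^ length w * fact (length w))"

definition EM :: "nat \<Rightarrow> real \<Rightarrow> 'a::real_normed_field vser set" where
  "EM m M = {c \<in> ser m. growth_bdd M c}"

definition snorm :: "real \<Rightarrow> 'a::real_normed_field vser \<Rightarrow> real" where
  "snorm M c = Sup {norm (c w i) / (M ^ length w * fact (length w)) | w i. True}"

definition LC :: "nat \<Rightarrow> 'a::real_normed_field vser set" where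
  "LC m = (\<Union>M\<in>{M. M > 0}. EM m M)"

definition absconv :: "'a::real_normed_field vser set \<Rightarrow> bool" where
  "absconv V \<longleftrightarrow>
     (\<forall>a v. v \<in> V \<longrightarrow> norm a \<le> 1 \<longrightarrow> smul a v \<in> V) \<and>
     (\<forall>u v (l::real). u \<in> V \<longrightarrow> v \<in> V \<longrightarrow> 0 \<le> l \<longrightarrow> l \<le> 1 \<longrightarrow>
        smul (of_real l) u + smul (of_real (1 - l)) v \<in> V)"

text \<open>0-neighbourhoods of the locally convex inductive limit: absolutely convex sets
  whose trace on every step E_M is a 0-neighbourhood of E_M.\<close>
definition zero_nbhd :: "nat \<Rightarrow> 'a::real_normed_field vser set \<Rightarrow> bool" where
  "zero_nbhd m V \<longleftrightarrow> V \<subseteq> LC m \<and> absconv V \<and>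
     (\<forall>M>0. \<exists>\<epsilon>>0. \<forall>c\<in>EM m M. snorm M c < \<epsilon> \<longrightarrow> c \<in> V)"

definition silva_open :: "nat \<Rightarrow> 'a::real_normed_field vser set \<Rightarrow> bool" where
  "silva_open m U \<longleftrightarrow> U \<subseteq> LC m \<and> (\<forall>u\<in>U. \<exists>V. zero_nbhd m V \<and> (\<forall>v\<in>V. u + v \<in> U))"

definition silva_tendsto ::
  "nat \<Rightarrow> ('b \<Rightarrow> 'a::real_normed_field vser) \<Rightarrow> 'a vser \<Rightarrow> 'b filter \<Rightarrow> bool" where
  "silva_tendsto m f L F \<longleftrightarrow> L \<in> LC m \<and>
     (\<forall>U. silva_open m U \<longrightarrow> L \<in> U \<longrightarrow> eventually (\<lambda>t. f t \<in> U) F)"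

definition dirderiv ::
  "nat \<Rightarrow> ('a::real_normed_field vser \<Rightarrow> 'a vser) \<Rightarrow> 'a vser \<Rightarrow> 'a vser \<Rightarrow> 'a vser \<Rightarrow> bool" where
  "dirderiv m f p v L \<longleftrightarrow>
     silva_tendsto m (\<lambda>t. smul (inverse t) (f (p + smul t v) - f p)) L (at 0)"

text \<open>X is (the chart expression of) the left-invariant vector field with value x at delta:
  X(g) = T_delta(lambda_g)(x) = d/dt (g o (delta + t x)) at t = 0.\<close>
definition is_livf :: "nat \<Rightarrow> 'a::real_normed_field vser \<Rightarrow> ('a vser \<Rightarrow> 'a vser) \<Rightarrow> bool" where
  "is_livf m x X \<longleftrightarrow> (\<forall>c\<in>LC m. dirderiv m (gprod m c) 0 x (X c))"

end

theory Submission
  imports Defs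
begin

text \<open>In the global chart \<open>\<delta> + c \<mapsto> c\<close>, the left-invariant field with value \<open>x\<close> at \<open>\<delta>\<close> is
  \<open>X(c) = d/dt (t x + c \<circ>\<^sup>~ (t x)\<^sub>\<delta>)\<close> at \<open>t = 0\<close>. Expanding \<open>\<phi>\<^bsub>tx\<^esub>(\<eta>)(1) = \<eta> + t (\<eta> \<lhd> x) + O(t\<^sup>2)\<close>
  gives \<open>X(c) = x + c \<lhd> x\<close>. The \<open>O(t\<^sup>2)\<close> remainder is dominated, uniformly in \<open>\<eta>\<close>, by a series of
  factorial growth, so the difference quotients converge inside a single Banach step \<open>E\<^sub>R\<close>
  and hence in the Silva topology. Since \<open>X\<close> is affine in \<open>c\<close>, the derivative of \<open>Y\<close> at \<open>\<delta>\<close> in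
  direction \<open>X(\<delta>) = x\<close> is exactly \<open>x \<lhd> y\<close>, which gives the bracket \<open>x \<lhd> y - y \<lhd> x\<close>.\<close>

section \<open>The shuffle product via deshuffling\<close>

fun deshuffles :: "nat list \<Rightarrow> (nat list \<times> nat list) list" where
  "deshuffles [] = [([], [])]"
| "deshuffles (a # w) =
     map (\<lambda>(u, v). (a # u, v)) (deshuffles w) @ map (\<lambda>(u, v). (u, a # v)) (deshuffles w)"

lemma deshuffles_components:
  "(u, v) \<in> set (deshuffles w) \<Longrightarrow> set w = set u \<union> set v \<and> length u + length v = length w"
  by (induction w arbitrary: u v) auto

lemma count_list_map_Cons:
  "count_list (map ((#) a) xs) w =
     (case w of [] \<Rightarrow> 0 | b # w' \<Rightarrow> if a = b then count_list xs w' else 0)"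
  by (induction xs) (auto split: list.splits)

lemma count_list_map_Cons_fst:
  "count_list (map (\<lambda>(u, v). (a # u, v)) xs) (u0, v0) =
     (case u0 of [] \<Rightarrow> 0 | b # u' \<Rightarrow> if a = b then count_list xs (u', v0) else 0)"
  by (induction xs) (auto split: list.splits)

lemma count_list_map_Cons_snd:
  "count_list (map (\<lambda>(u, v). (u, a # v)) xs) (u0, v0) =
     (case v0 of [] \<Rightarrow> 0 | b # v' \<Rightarrow> if a = b then count_list xs (u0, v') else 0)"
  by (induction xs) (auto split: list.splits)

lemma wsh_Nil_right [simp]: "wsh u [] = [u]"
  by (cases u) auto

lemma Nil_in_wsh_iff: "[] \<in> set (wsh u v) \<longleftrightarrow> u = [] \<and> v = []"
  by (induction u v rule: wsh.induct) auto

lemma count_wsh_eq_count_deshuffles: "count_list (wsh u v) w = count_list (deshuffles w) (u, v)"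
proof (induction w arbitrary: u v)
  case Nil
  show ?case
  proof (cases "u = [] \<and> v = []")
    case False
    then have "count_list (wsh u v) [] = 0"
      by (simp add: count_list_0_iff Nil_in_wsh_iff)
    with False show ?thesis by auto
  qed simp
next
  case (Cons c w)
  note counts = count_list_map_Cons_fst count_list_map_Cons_snd count_list_map_Cons
  show ?case
  proof (cases u)
    case Nil
    have "count_list (deshuffles w) ([], v') = (if v' = w then 1 else 0)" for v'
      using Cons.IH[of "[]" v'] by (cases "v' = w") auto
    with Nil show ?thesis by (cases v) (auto simp: counts)
  next
    case u: (Cons a u')
    then show ?thesis by (cases v) (auto simp: counts Cons.IH[symmetric])
  qed
qed

lemma sum_of_nat_count_list:
  fixes f :: "'b \<Rightarrow> 'a::comm_ring_1"
  assumes "set xs \<subseteq> X" "finite X"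
  shows "(\<Sum>z\<in>X. of_nat (count_list xs z) * f z) = sum_list (map f xs)"
  using assms(1)
proof (induction xs)
  case (Cons x xs)
  have "(\<Sum>z\<in>X. of_nat (count_list (x # xs) z) * f z)
      = (\<Sum>z\<in>X. of_nat (count_list xs z) * f z + (if x = z then f z else 0))"
    by (rule sum.cong) (auto simp: algebra_simps)
  also have "\<dots> = (\<Sum>z\<in>X. of_nat (count_list xs z) * f z) + f x"
    using Cons.prems assms(2) by (simp add: sum.distrib)
  finally show ?case using Cons by simp
qed simp

lemma ssh_eq_sum_deshuffles: "ssh a b w = (\<Sum>(u, v)\<leftarrow>deshuffles w. a u * b v)"
proof -
  define S where "S = {u. set u \<subseteq> set w \<and> length u \<le> length w}"
  have "finite S" unfolding S_def by (rule finite_lists_length_le) simp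
  have "set (deshuffles w) \<subseteq> S \<times> S"
    using deshuffles_components unfolding S_def by fastforce
  have "ssh a b w = (\<Sum>u\<in>S. \<Sum>v\<in>S. a u * b v * of_nat (count_list (deshuffles w) (u, v)))"
    unfolding ssh_def S_def by (simp add: count_wsh_eq_count_deshuffles)
  also have "\<dots> = (\<Sum>z\<in>S \<times> S. of_nat (count_list (deshuffles w) z) * (\<lambda>(u, v). a u * b v) z)"
    by (subst sum.cartesian_product) (auto intro!: sum.cong simp: algebra_simps)
  also have "\<dots> = (\<Sum>(u, v)\<leftarrow>deshuffles w. a u * b v)"
    using \<open>set (deshuffles w) \<subseteq> S \<times> S\<close> \<open>finite S\<close> by (intro sum_of_nat_count_list) auto
  finally show ?thesis .
qed

lemma sum_deshuffles_swap:
  fixes a b :: "'a::comm_ring_1 sser"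
  shows "(\<Sum>(u, v)\<leftarrow>deshuffles w. a u * b v) = (\<Sum>(u, v)\<leftarrow>deshuffles w. b u * a v)"
proof (induction w arbitrary: a b)
  case (Cons c w)
  show ?case
    using Cons.IH[of "\<lambda>u. a (c # u)" b] Cons.IH[of a "\<lambda>v. b (c # v)"]
    by (simp add: o_def case_prod_unfold add.commute)
qed (simp add: mult.commute)

lemma ssh_commute: "ssh a b w = ssh b a w"
  unfolding ssh_eq_sum_deshuffles by (rule sum_deshuffles_swap)

lemma ssh_mult_left: "ssh (\<lambda>u. t * a u) b w = t * ssh a b w"
  unfolding ssh_def by (simp add: sum_distrib_left algebra_simps)

lemma ssh_mult_right: "ssh a (\<lambda>v. t * b v) w = t * ssh a b w"
  unfolding ssh_def by (simp add: sum_distrib_left algebra_simps)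

lemma ssh_diff_right: "ssh a (\<lambda>v. b v - b' v) w = ssh a b w - ssh a b' w"
  unfolding ssh_def by (simp add: sum_subtractf algebra_simps)

lemma ssh_zero_left [simp]: "ssh (\<lambda>u. 0) b w = 0"
  unfolding ssh_def by simp

lemma ssh_eq_0_outside:
  assumes "\<And>u. \<not> set u \<subseteq> S \<Longrightarrow> a u = 0" "\<And>v. \<not> set v \<subseteq> S \<Longrightarrow> b v = 0" "\<not> set w \<subseteq> S"
  shows "ssh a b w = 0"
proof -
  have "a u * b v = 0" if "(u, v) \<in> set (deshuffles w)" for u v
    using deshuffles_components[OF that] assms by fastforce
  then have "map (\<lambda>(u, v). a u * b v) (deshuffles w) = map (\<lambda>_. 0) (deshuffles w)"
    by (intro map_cong) auto
  then show ?thesis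
    by (simp only: ssh_eq_sum_deshuffles map_replicate_const sum_list_replicate) simp
qed

lemma sum_deshuffles_lengths:
  fixes f h :: "nat \<Rightarrow> real"
  shows "(\<Sum>(u, v)\<leftarrow>deshuffles w. f (length u) * h (length v)) =
         (\<Sum>k\<le>length w. real (length w choose k) * f k * h (length w - k))"
proof (induction w arbitrary: f h)
  case (Cons c w)
  define n where "n = length w"
  have split: "(\<Sum>(u, v)\<leftarrow>deshuffles (c # w). f (length u) * h (length v)) =
     (\<Sum>k\<le>n. real (n choose k) * f (Suc k) * h (n - k)) +
     (\<Sum>k\<le>n. real (n choose k) * f k * h (Suc n - k))"
    using Cons.IH[of "\<lambda>k. f (Suc k)" h] Cons.IH[of f "\<lambda>k. h (Suc k)"]
    by (simp add: o_def case_prod_unfold n_def Suc_diff_le)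
  have "(\<Sum>k\<le>n. real (n choose k) * f k * h (Suc n - k)) =
        (\<Sum>k\<le>Suc n. real (n choose k) * f k * h (Suc n - k))"
    by simp
  also have "\<dots> = f 0 * h (Suc n) + (\<Sum>k\<le>n. real (n choose Suc k) * f (Suc k) * h (n - k))"
    by (subst sum.atMost_Suc_shift) simp
  finally have shift: "(\<Sum>k\<le>n. real (n choose k) * f k * h (Suc n - k)) =
        f 0 * h (Suc n) + (\<Sum>k\<le>n. real (n choose Suc k) * f (Suc k) * h (n - k))" .
  have pascal: "(\<Sum>k\<le>Suc n. real (Suc n choose k) * f k * h (Suc n - k)) =
        f 0 * h (Suc n) + (\<Sum>k\<le>n. real (n choose k) * f (Suc k) * h (n - k))
          + (\<Sum>k\<le>n. real (n choose Suc k) * f (Suc k) * h (n - k))"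
    by (subst sum.atMost_Suc_shift) (simp add: sum.distrib algebra_simps)
  show ?case using split shift pascal by (simp add: n_def)
qed simp

lemma norm_sum_list_le: "norm (\<Sum>z\<leftarrow>xs. f z) \<le> (\<Sum>z\<leftarrow>xs. norm (f z))"
  by (induction xs) (auto intro: order.trans[OF norm_triangle_ineq])

lemma norm_ssh_le:
  fixes a b :: "'a::real_normed_field sser"
  assumes "\<And>u. set u \<subseteq> S \<Longrightarrow> norm (a u) \<le> f (length u)"
      and "\<And>v. set v \<subseteq> S \<Longrightarrow> norm (b v) \<le> h (length v)"
      and "\<And>k. 0 \<le> f k" "\<And>k. 0 \<le> h k" "set w \<subseteq> S"
  shows "norm (ssh a b w) \<le> (\<Sum>k\<le>length w. real (length w choose k) * f k * h (length w - k))"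
proof -
  have "norm (ssh a b w) \<le> (\<Sum>(u, v)\<leftarrow>deshuffles w. norm (a u * b v))"
    unfolding ssh_eq_sum_deshuffles using norm_sum_list_le[of "\<lambda>(u, v). a u * b v"]
    by (simp add: case_prod_unfold)
  also have "\<dots> \<le> (\<Sum>(u, v)\<leftarrow>deshuffles w. f (length u) * h (length v))"
  proof (rule sum_list_mono, clarify)
    fix u v assume "(u, v) \<in> set (deshuffles w)"
    then have "set u \<subseteq> S" "set v \<subseteq> S"
      using deshuffles_components assms(5) by auto
    then show "norm (a u * b v) \<le> f (length u) * h (length v)"
      using assms(1,2) by (simp add: norm_mult mult_mono')
  qed
  also have "\<dots> = (\<Sum>k\<le>length w. real (length w choose k) * f k * h (length w - k))"
    by (rule sum_deshuffles_lengths)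
  finally show ?thesis .
qed


section \<open>Factorial envelopes\<close>

text \<open>The argument \<open>p\<close> stands for \<open>|\<eta>|\<close>: \<open>\<phi>\<^sub>d(\<eta>)(1)\<close> only contains words of length at least \<open>|\<eta>|\<close>,
  and the factor \<open>1/p!\<close> is what makes the envelope stable under one more application of
  \<open>\<phi>\<^sub>d(x\<^sub>i)\<close> (lemma norm_pre_ssh_le).\<close>
definition env :: "nat \<Rightarrow> real \<Rightarrow> nat \<Rightarrow> nat list \<Rightarrow> real" where
  "env m A p w =
     (if set w \<subseteq> {0..m} \<and> p \<le> length w then A ^ length w * fact (length w) / fact p else 0)"

lemma env_nonneg: "0 \<le> A \<Longrightarrow> 0 \<le> env m A p w"
  unfolding env_def by auto

lemma env_Cons_ge:
  assumes "c \<le> m" "0 \<le> A"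
  shows "A * env m A p w \<le> env m A (Suc p) (c # w)"
proof (cases "set w \<subseteq> {0..m} \<and> p \<le> length w")
  case True
  then have "fact (length w) * fact (Suc p) \<le> (fact (Suc (length w)) * fact p :: real)"
    by (simp add: algebra_simps mult_right_mono)
  then have "fact (length w) / fact p \<le> (fact (Suc (length w)) / fact (Suc p) :: real)"
    by (simp add: divide_simps)
  then have "A * (A ^ length w * (fact (length w) / fact p))
      \<le> A * (A ^ length w * (fact (Suc (length w)) / fact (Suc p)))"
    using assms(2) by (intro mult_left_mono) auto
  then show ?thesis using True assms(1) by (simp add: env_def)
qed (use assms in \<open>auto simp: env_def\<close>)

lemma binomial_term_le:
  fixes A B M :: real
  assumes M: "0 < M" and B: "0 \<le> B" and A: "2 * M \<le> A" and k: "k \<le> n"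
  shows "real (n choose k) * (B * M ^ k * fact k) * (A ^ (n - k) * fact (n - k) / fact p)
    \<le> B * A ^ n * fact n / fact p * (1/2) ^ k"
proof -
  have "M ^ k * A ^ (n - k) \<le> (A/2) ^ k * A ^ (n - k)"
    using M A by (intro mult_right_mono power_mono) auto
  also have "\<dots> = (1/2) ^ k * (A ^ k * A ^ (n - k))"
    by (simp add: power_divide)
  also have "A ^ k * A ^ (n - k) = A ^ n"
    using k by (simp flip: power_add)
  finally have MA: "M ^ k * A ^ (n - k) \<le> A ^ n * (1/2) ^ k"
    by (simp add: mult.commute)
  have "real (fact k * fact (n - k) * (n choose k)) = real (fact n)"
    using binomial_fact_lemma[OF k] by (simp only:)
  then have fact_n: "real (n choose k) * fact k * fact (n - k) = fact n"
    by (simp add: algebra_simps)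
  have "real (n choose k) * (B * M ^ k * fact k) * (A ^ (n - k) * fact (n - k) / fact p)
      = B * (M ^ k * A ^ (n - k)) * (real (n choose k) * fact k * fact (n - k)) / fact p"
    by (simp add: ac_simps)
  also have "\<dots> \<le> B * (A ^ n * (1/2) ^ k) * fact n / fact p"
    unfolding fact_n using MA B by (intro divide_right_mono mult_right_mono mult_left_mono) auto
  finally show ?thesis
    by (simp add: ac_simps)
qed

lemma sum_binomial_env_le:
  fixes A B M :: real
  assumes M: "0 < M" and B: "0 \<le> B" and A: "2 * M \<le> A"
  shows "(\<Sum>k\<le>n. real (n choose k) * (B * M ^ k * fact k) *
            (if p \<le> n - k then A ^ (n - k) * fact (n - k) / fact p else 0))
         \<le> 2 * B * (if p \<le> n then A ^ n * fact n / fact p else 0)"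
proof (cases "p \<le> n")
  case True
  have "(\<Sum>k\<le>n. real (n choose k) * (B * M ^ k * fact k) *
            (if p \<le> n - k then A ^ (n - k) * fact (n - k) / fact p else 0))
        \<le> (\<Sum>k\<le>n. B * A ^ n * fact n / fact p * (1/2) ^ k)"
    using binomial_term_le[OF M B A] M A B by (intro sum_mono) auto
  also have "\<dots> = B * A ^ n * fact n / fact p * (\<Sum>k<Suc n. (1/2) ^ k)"
    by (simp add: sum_distrib_left lessThan_Suc_atMost)
  also have "\<dots> \<le> B * A ^ n * fact n / fact p * 2"
    using M A B by (intro mult_left_mono) (auto simp: geometric_sum)
  finally show ?thesis using True by (simp add: ac_simps)
next
  case False
  then have "\<not> p \<le> n - k" for k by auto
  with False show ?thesis by simp
qed

definition coeff_le :: "nat \<Rightarrow> real \<Rightarrow> real \<Rightarrow> 'a::real_normed_field vser \<Rightarrow> bool" where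
  "coeff_le m K M c \<longleftrightarrow> (\<forall>w i. norm (c w i) \<le>
      (if set w \<subseteq> {0..m} \<and> i \<in> {1..m} then K * M ^ length w * fact (length w) else 0))"

lemma norm_comp_le:
  assumes "coeff_le m B M x" "i \<le> m" "0 \<le> B" "0 < M"
  shows "norm (comp i x u) \<le> (if set u \<subseteq> {0..m} then B * M ^ length u * fact (length u) else 0)"
proof (cases "i = 0")
  case False
  then show ?thesis
    using assms(1)[unfolded coeff_le_def, rule_format, of u i] assms(2)
    by (simp add: Defs.comp_def)
qed (use assms in \<open>simp add: Defs.comp_def\<close>)

lemma pre_Nil [simp]: "pre i e [] = 0"
  by (simp add: pre_def)

lemma pre_Cons [simp]: "pre i e (a # w) = (if a = i then e w else 0)"
  by (simp add: pre_def)

lemma norm_ssh_env_le: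
  fixes a G :: "'a::real_normed_field sser"
  assumes M: "0 < M" and B: "0 \<le> B" and AM: "2 * M \<le> A" and s: "0 \<le> s"
    and a: "\<And>u. set u \<subseteq> {0..m} \<Longrightarrow> norm (a u) \<le> B * M ^ length u * fact (length u)"
    and G: "\<And>v. norm (G v) \<le> s * env m A p v"
    and w: "set w \<subseteq> {0..m}"
  shows "norm (ssh a G w) \<le> 2 * B * (s * env m A p w)"
proof -
  define n where "n = length w"
  let ?h = "\<lambda>k. s * (if p \<le> k then A ^ k * fact k / fact p else 0)"
  have "norm (ssh a G w) \<le> (\<Sum>k\<le>n. real (n choose k) * (B * M ^ k * fact k) * ?h (n - k))"
    unfolding n_def
  proof (rule norm_ssh_le[where S = "{0..m}"])
    show "norm (G v) \<le> ?h (length v)" if "set v \<subseteq> {0..m}" for v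
      using G[of v] that by (simp add: env_def)
  qed (use a B M AM s w in auto)
  also have "\<dots> = s * (\<Sum>k\<le>n. real (n choose k) * (B * M ^ k * fact k) *
                     (if p \<le> n - k then A ^ (n - k) * fact (n - k) / fact p else 0))"
    by (simp add: sum_distrib_left ac_simps)
  also have "\<dots> \<le> s * (2 * B * (if p \<le> n then A ^ n * fact n / fact p else 0))"
    using sum_binomial_env_le[OF M B AM] s by (intro mult_left_mono) auto
  also have "(if p \<le> n then A ^ n * fact n / fact p else 0) = env m A p w"
    using w unfolding env_def n_def by simp
  finally show ?thesis by (simp add: ac_simps)
qed

lemma norm_pre_ssh_le:
  fixes F G a :: "'a::real_normed_field sser"
  assumes i: "i \<le> m" and M: "0 < M" and B: "0 \<le> B" and A: "2 * M \<le> A" "1 + 2 * B \<le> A"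
    and s: "0 \<le> s"
    and a: "\<And>u. norm (a u) \<le> (if set u \<subseteq> {0..m} then B * M ^ length u * fact (length u) else 0)"
    and F: "\<And>w. norm (F w) \<le> s * env m A p w"
    and G: "\<And>w. norm (G w) \<le> s * env m A p w"
  shows "norm (pre i F w + pre 0 (ssh a G) w) \<le> s * env m A (Suc p) w"
proof (cases w)
  case Nil
  then show ?thesis using s A B by (simp add: env_nonneg)
next
  case (Cons c w')
  have A0: "0 \<le> A" using A B by simp
  have vanish: "F v = 0" "G v = 0" "a v = 0" if "\<not> set v \<subseteq> {0..m}" for v
    using F[of v] G[of v] a[of v] that by (auto simp: env_def)
  consider "c \<noteq> i" "c \<noteq> 0" | "c \<le> m" "\<not> set w' \<subseteq> {0..m}" | "c \<le> m" "set w' \<subseteq> {0..m}"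
    using i by force
  then show ?thesis
  proof cases
    case 1
    then show ?thesis using Cons s env_nonneg[OF A0] by simp
  next
    case 2
    then have "ssh a G w' = 0" by (intro ssh_eq_0_outside[OF vanish(3) vanish(2)])
    then show ?thesis using 2 vanish(1) Cons s env_nonneg[OF A0] by simp
  next
    case 3
    have a': "norm (a u) \<le> B * M ^ length u * fact (length u)" if "set u \<subseteq> {0..m}" for u
      using a[of u] that by simp
    have "norm (pre i F w + pre 0 (ssh a G) w) \<le> norm (F w') + norm (ssh a G w')"
      using Cons by (auto intro: order.trans[OF norm_triangle_ineq])
    also have "\<dots> \<le> s * env m A p w' + 2 * B * (s * env m A p w')"
      using F norm_ssh_env_le[OF M B A(1) s a' G 3(2)] by (intro add_mono) auto
    also have "\<dots> = (1 + 2 * B) * (s * env m A p w')"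
      by (simp add: algebra_simps)
    also have "\<dots> \<le> A * (s * env m A p w')"
      using A(2) s env_nonneg[OF A0] by (intro mult_right_mono) auto
    also have "\<dots> \<le> s * env m A (Suc p) w"
      using mult_left_mono[OF env_Cons_ge[OF 3(1) A0] s] Cons by (simp add: mult.left_commute)
    finally show ?thesis .
  qed
qed

section \<open>First-order expansion of \<open>\<phi>\<^bsub>tx\<^esub>(\<eta>)(1)\<close>\<close>

lemma phiw_Cons_apply:
  "phiw d (i # \<eta>) e w = pre i (phiw d \<eta> e) w + pre 0 (ssh (comp i d) (phiw d \<eta> e)) w"
  by (simp add: phi1_def)

lemma comp_smul:
  fixes x :: "'a::comm_ring_1 vser"
  shows "comp i (smul t x) = (\<lambda>u. t * comp i x u)"
  by (rule ext) (simp add: Defs.comp_def smul_def)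

lemma comp_0 [simp]: "comp 0 d = (\<lambda>u. 0)"
  by (rule ext) (simp add: Defs.comp_def)

lemma chr_Cons: "chr (i # \<eta>) w = pre i (chr \<eta>) w"
  by (cases w) (auto simp: chr_def)

lemma phiw_smul_Cons_apply:
  "phiw (smul t x) (i # \<eta>) e w =
     pre i (phiw (smul t x) \<eta> e) w + pre 0 (ssh (comp i x) (\<lambda>v. t * phiw (smul t x) \<eta> e v)) w"
proof -
  have "ssh (comp i (smul t x)) f = ssh (comp i x) (\<lambda>v. t * f v)" for f
    by (rule ext) (simp add: comp_smul ssh_mult_left ssh_mult_right)
  then show ?thesis by (simp only: phiw_Cons_apply)
qed

lemma phiw_zero: "phiw (0 :: 'a::comm_ring_1 vser) \<eta> (chr []) = chr \<eta>"
proof (induction \<eta>)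
  case (Cons i \<eta>)
  have comp_zero: "comp i (\<lambda>w j. 0 :: 'a) = (\<lambda>u. 0)"
    by (simp add: fun_eq_iff Defs.comp_def)
  show ?case
    using Cons.IH by (simp add: comp_zero fun_eq_iff phi1_def chr_Cons pre_def split: list.split)
qed simp

lemma wpl_Cons_apply:
  "wpl x (i # \<eta>) w = pre i (wpl x \<eta>) w + pre 0 (ssh (comp i x) (chr \<eta>)) w"
  by (cases w) (auto simp: ssh_commute)

context
  fixes x :: "'a::real_normed_field vser" and m :: nat and B M A :: real
  assumes x: "coeff_le m B M x" and B: "0 \<le> B" and M: "0 < M"
    and A: "2 * M \<le> A" "1 + 2 * B \<le> A"
begin

lemma A_ge_1: "1 \<le> A"
  using A B by simp

lemma norm_le_env_recursive:
  fixes F G :: "nat list \<Rightarrow> 'a sser"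
  assumes s: "0 \<le> s"
    and F_Nil: "\<And>w. norm (F [] w) \<le> s * env m A 0 w"
    and F_Cons: "\<And>i \<eta> w. F (i # \<eta>) w = pre i (F \<eta>) w + pre 0 (ssh (comp i x) (G \<eta>)) w"
    and G: "\<And>\<eta> v. set \<eta> \<subseteq> {0..m} \<Longrightarrow> (\<And>w. norm (F \<eta> w) \<le> s * env m A (length \<eta>) w) \<Longrightarrow>
              norm (G \<eta> v) \<le> s * env m A (length \<eta>) v"
    and \<eta>: "set \<eta> \<subseteq> {0..m}"
  shows "norm (F \<eta> w) \<le> s * env m A (length \<eta>) w"
  using \<eta>
proof (induction \<eta> arbitrary: w)
  case Nil
  then show ?case using F_Nil by simp
next
  case (Cons i \<eta>)
  then have i: "i \<le> m" and \<eta>: "set \<eta> \<subseteq> {0..m}" by auto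
  show ?case
    unfolding F_Cons length_Cons
    by (rule norm_pre_ssh_le[OF i M B A s norm_comp_le[OF x i B M]])
      (use Cons.IH G[OF \<eta>] \<eta> in auto)
qed

lemma norm_phiw_le:
  assumes t: "norm t \<le> 1" and \<eta>: "set \<eta> \<subseteq> {0..m}"
  shows "norm (phiw (smul t x) \<eta> (chr []) w) \<le> env m A (length \<eta>) w"
proof -
  have "norm (phiw (smul t x) \<eta> (chr []) w) \<le> 1 * env m A (length \<eta>) w"
  proof (rule norm_le_env_recursive[where F = "\<lambda>\<eta>. phiw (smul t x) \<eta> (chr [])"
        and G = "\<lambda>\<eta> v. t * phiw (smul t x) \<eta> (chr []) v", OF _ _ phiw_smul_Cons_apply _ \<eta>])
    show "norm (phiw (smul t x) [] (chr []) w) \<le> 1 * env m A 0 w" for w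
      using A_ge_1 by (simp add: chr_def env_def)
    show "norm (t * phiw (smul t x) \<eta>' (chr []) v) \<le> 1 * env m A (length \<eta>') v"
      if "\<And>w. norm (phiw (smul t x) \<eta>' (chr []) w) \<le> 1 * env m A (length \<eta>') w" for \<eta>' v
      using mult_mono[OF t that[of v]] by (simp add: norm_mult)
  qed simp
  then show ?thesis by simp
qed

lemma norm_phiw_sub_chr_le:
  assumes t: "norm t \<le> 1" and \<eta>: "set \<eta> \<subseteq> {0..m}"
  shows "norm (phiw (smul t x) \<eta> (chr []) w - chr \<eta> w) \<le> norm t * env m A (length \<eta>) w"
proof (rule norm_le_env_recursive[where F = "\<lambda>\<eta> v. phiw (smul t x) \<eta> (chr []) v - chr \<eta> v"
      and G = "\<lambda>\<eta> v. t * phiw (smul t x) \<eta> (chr []) v", OF _ _ _ _ \<eta>])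
  show "phiw (smul t x) (i # \<eta>') (chr []) w - chr (i # \<eta>') w =
      pre i (\<lambda>v. phiw (smul t x) \<eta>' (chr []) v - chr \<eta>' v) w
      + pre 0 (ssh (comp i x) (\<lambda>v. t * phiw (smul t x) \<eta>' (chr []) v)) w" for i \<eta>' w
    unfolding phiw_smul_Cons_apply chr_Cons by (cases w) auto
  show "norm (t * phiw (smul t x) \<eta>' (chr []) v) \<le> norm t * env m A (length \<eta>') v"
    if "set \<eta>' \<subseteq> {0..m}" for \<eta>' v
    using norm_phiw_le[OF t that] by (simp add: norm_mult mult_left_mono)
qed (use A_ge_1 in \<open>simp_all add: env_nonneg\<close>)

lemma norm_phiw_remainder_le:
  assumes t: "norm t \<le> 1" and \<eta>: "set \<eta> \<subseteq> {0..m}"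
  shows "norm (phiw (smul t x) \<eta> (chr []) w - chr \<eta> w - t * wpl x \<eta> w)
    \<le> norm t ^ 2 * env m A (length \<eta>) w"
proof (rule norm_le_env_recursive[where F = "\<lambda>\<eta> v. phiw (smul t x) \<eta> (chr []) v - chr \<eta> v - t * wpl x \<eta> v"
      and G = "\<lambda>\<eta> v. t * (phiw (smul t x) \<eta> (chr []) v - chr \<eta> v)", OF _ _ _ _ \<eta>])
  show "phiw (smul t x) (i # \<eta>') (chr []) w - chr (i # \<eta>') w - t * wpl x (i # \<eta>') w =
      pre i (\<lambda>v. phiw (smul t x) \<eta>' (chr []) v - chr \<eta>' v - t * wpl x \<eta>' v) w
      + pre 0 (ssh (comp i x) (\<lambda>v. t * (phiw (smul t x) \<eta>' (chr []) v - chr \<eta>' v))) w"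
    for i \<eta>' w
    unfolding phiw_smul_Cons_apply chr_Cons wpl_Cons_apply
    by (cases w) (auto simp: ssh_mult_right ssh_diff_right algebra_simps)
  show "norm (t * (phiw (smul t x) \<eta>' (chr []) v - chr \<eta>' v)) \<le> norm t ^ 2 * env m A (length \<eta>') v"
    if "set \<eta>' \<subseteq> {0..m}" for \<eta>' v
    using norm_phiw_sub_chr_le[OF t that]
    by (simp add: norm_mult mult_left_mono power2_eq_square mult.assoc)
qed (use A_ge_1 in \<open>simp_all add: env_nonneg\<close>)

lemma norm_phiw_remainder_quotient_le:
  assumes t: "t \<noteq> 0" "norm t \<le> 1" and \<eta>: "set \<eta> \<subseteq> {0..m}"
  shows "norm (inverse t * (phiw (smul t x) \<eta> (chr []) w - chr \<eta> w - t * wpl x \<eta> w))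
    \<le> norm t * env m A (length \<eta>) w"
proof -
  have "norm (inverse t * (phiw (smul t x) \<eta> (chr []) w - chr \<eta> w - t * wpl x \<eta> w))
      \<le> inverse (norm t) * (norm t ^ 2 * env m A (length \<eta>) w)"
    unfolding norm_mult norm_inverse
    by (intro mult_left_mono norm_phiw_remainder_le[OF t(2) \<eta>]) auto
  also have "\<dots> = norm t * env m A (length \<eta>) w"
    using t(1) by (simp add: power2_eq_square)
  finally show ?thesis .
qed

lemma norm_wpl_le:
  assumes \<eta>: "set \<eta> \<subseteq> {0..m}"
  shows "norm (wpl x \<eta> w) \<le> 2 * env m A (length \<eta>) w"
proof -
  have "smul 1 x = x" by (simp add: smul_def)
  then have "norm (phiw x \<eta> (chr []) w - chr \<eta> w) \<le> env m A (length \<eta>) w"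
    and "norm (phiw x \<eta> (chr []) w - chr \<eta> w - wpl x \<eta> w) \<le> env m A (length \<eta>) w"
    using norm_phiw_sub_chr_le[of 1 \<eta> w] norm_phiw_remainder_le[of 1 \<eta> w] \<eta> by simp_all
  then show ?thesis
    using norm_triangle_ineq4[of "phiw x \<eta> (chr []) w - chr \<eta> w" "phiw x \<eta> (chr []) w - chr \<eta> w - wpl x \<eta> w"]
    by simp
qed

end
section \<open>Coefficient bounds and the steps \<open>E\<^sub>M\<close>\<close>

lemma coeff_leI:
  assumes "\<And>w i. set w \<subseteq> {0..m} \<Longrightarrow> i \<in> {1..m} \<Longrightarrow> norm (c w i) \<le> K * M ^ length w * fact (length w)"
    and "\<And>w i. \<not> (set w \<subseteq> {0..m} \<and> i \<in> {1..m}) \<Longrightarrow> c w i = 0"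
  shows "coeff_le m K M c"
  using assms unfolding coeff_le_def by auto

lemma coeff_leD:
  assumes "coeff_le m K M c"
  shows "set w \<subseteq> {0..m} \<Longrightarrow> i \<in> {1..m} \<Longrightarrow> norm (c w i) \<le> K * M ^ length w * fact (length w)"
    and "\<not> (set w \<subseteq> {0..m} \<and> i \<in> {1..m}) \<Longrightarrow> c w i = 0"
  using assms[unfolded coeff_le_def, rule_format, of w i] by (auto split: if_split_asm)

lemma coeff_le_EM:
  assumes R: "0 < R" and C: "0 \<le> C" and z: "coeff_le m C R z"
  shows "z \<in> EM m R" and "snorm R z \<le> C"
proof -
  have pos: "0 < R ^ length w * fact (length w)" for w
    using R by simp
  have bound: "norm (z w i) \<le> C * R ^ length w * fact (length w)" for w i
    using coeff_leD[OF z, of w i] C R by (cases "set w \<subseteq> {0..m} \<and> i \<in> {1..m}") auto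
  have "z \<in> ser m"
    unfolding ser_def using coeff_leD(2)[OF z] by blast
  with bound show "z \<in> EM m R"
    unfolding EM_def growth_bdd_def by blast
  show "snorm R z \<le> C"
    unfolding snorm_def
  proof (rule cSup_least)
    fix r assume "r \<in> {norm (z w i) / (R ^ length w * fact (length w)) |w i. True}"
    then obtain w i where "r = norm (z w i) / (R ^ length w * fact (length w))" by blast
    then show "r \<le> C" using bound[of w i] pos[of w] by (simp add: divide_le_eq mult.assoc)
  qed blast
qed

lemma EM_imp_coeff_le:
  assumes "c \<in> EM m M"
  obtains K where "0 \<le> K" "coeff_le m K M c"
proof -
  from assms obtain K where K: "\<And>w i. norm (c w i) \<le> K * M ^ length w * fact (length w)"
    and "c \<in> ser m"
    unfolding EM_def growth_bdd_def by blast
  have "0 \<le> K" using K[of "[]" 0] by (simp add: order.trans[OF norm_ge_zero])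
  moreover have "coeff_le m K M c"
    using K \<open>c \<in> ser m\<close> unfolding ser_def by (intro coeff_leI) auto
  ultimately show thesis by (rule that)
qed

lemma LC_iff_coeff_le: "c \<in> LC m \<longleftrightarrow> (\<exists>M>0. \<exists>K\<ge>0. coeff_le m K M c)"
  unfolding LC_def by (blast elim: EM_imp_coeff_le intro: coeff_le_EM(1))

lemma coeff_le_mono:
  assumes c: "coeff_le m K M c" and "0 \<le> K" "0 < M" "M \<le> M'" "K \<le> K'"
  shows "coeff_le m K' M' c"
proof (rule coeff_leI)
  fix w i assume "set w \<subseteq> {0..m}" "i \<in> {1..m}"
  then have "norm (c w i) \<le> K * M ^ length w * fact (length w)" by (rule coeff_leD(1)[OF c])
  also have "\<dots> \<le> K' * M' ^ length w * fact (length w)"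
    using assms by (intro mult_right_mono mult_mono power_mono) auto
  finally show "norm (c w i) \<le> K' * M' ^ length w * fact (length w)" .
qed (rule coeff_leD(2)[OF c])

lemma coeff_le_add:
  assumes c: "coeff_le m K M c" and d: "coeff_le m K' M d"
  shows "coeff_le m (K + K') M (c + d)"
proof (rule coeff_leI)
  fix w i assume "set w \<subseteq> {0..m}" "i \<in> {1..m}"
  then show "norm ((c + d) w i) \<le> (K + K') * M ^ length w * fact (length w)"
    using coeff_leD(1)[OF c] coeff_leD(1)[OF d]
    by (simp add: algebra_simps order.trans[OF norm_triangle_ineq] add_mono)
qed (simp add: coeff_leD(2)[OF c] coeff_leD(2)[OF d])

lemma coeff_le_smul:
  assumes c: "coeff_le m K M c"
  shows "coeff_le m (norm a * K) M (smul a c)"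
proof (rule coeff_leI)
  fix w i assume "set w \<subseteq> {0..m}" "i \<in> {1..m}"
  then show "norm (smul a c w i) \<le> norm a * K * M ^ length w * fact (length w)"
    using mult_left_mono[OF coeff_leD(1)[OF c], of w i "norm a"]
    by (simp add: smul_def norm_mult mult.assoc)
qed (simp add: smul_def coeff_leD(2)[OF c])

lemma LC_add:
  assumes "c \<in> LC m" "d \<in> LC m"
  shows "c + d \<in> LC m"
proof -
  obtain M K M' K' where MK: "0 < M" "0 \<le> K" "coeff_le m K M c"
    and MK': "0 < M'" "0 \<le> K'" "coeff_le m K' M' d"
    using assms unfolding LC_iff_coeff_le by blast
  have "coeff_le m K (max M M') c" "coeff_le m K' (max M M') d"
    using coeff_le_mono[OF MK(3) MK(2) MK(1)] coeff_le_mono[OF MK'(3) MK'(2) MK'(1)] by auto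
  then have "coeff_le m (K + K') (max M M') (c + d)"
    by (rule coeff_le_add)
  then show ?thesis
    unfolding LC_iff_coeff_le using MK MK' by (meson add_nonneg_nonneg max.strict_coboundedI1)
qed

lemma LC_smul:
  assumes "c \<in> LC m"
  shows "smul a c \<in> LC m"
proof -
  obtain M K where "0 < M" "0 \<le> K" "coeff_le m K M c"
    using assms unfolding LC_iff_coeff_le by blast
  then show ?thesis
    unfolding LC_iff_coeff_le by (meson coeff_le_smul mult_nonneg_nonneg norm_ge_zero)
qed

lemma LC_zero: "0 \<in> LC m"
proof -
  have "coeff_le m 0 1 0"
    by (simp add: coeff_le_def)
  then show ?thesis
    unfolding LC_iff_coeff_le by (meson order_refl zero_less_one)
qed

lemma card_words_le: "real (card {\<eta>. set \<eta> \<subseteq> {0..m} \<and> length \<eta> \<le> n}) \<le> (2 * (real m + 1)) ^ n"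
proof -
  have "card {\<eta>. set \<eta> \<subseteq> {0..m} \<and> length \<eta> \<le> n} = (\<Sum>i\<le>n. (m + 1) ^ i)"
    by (subst card_lists_length_le) auto
  also have "\<dots> \<le> (\<Sum>i\<le>n. (m + 1) ^ n)"
    by (intro sum_mono power_increasing) auto
  also have "\<dots> = Suc n * (m + 1) ^ n" by simp
  also have "\<dots> \<le> 2 ^ n * (m + 1) ^ n"
    using less_exp[of n] by (intro mult_right_mono) (auto simp: Suc_le_eq)
  finally have "real (card {\<eta>. set \<eta> \<subseteq> {0..m} \<and> length \<eta> \<le> n}) \<le> real (2 ^ n * (m + 1) ^ n)"
    by (simp only: of_nat_le_iff)
  then show ?thesis unfolding power_mult_distrib by (simp add: add.commute)
qed


lemma norm_coeff_mult_env_le: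
  assumes c: "coeff_le m K Mc c" and K: "0 \<le> K" and Mc: "0 < Mc" and A: "1 \<le> A" and s: "0 \<le> s"
    and \<eta>: "set \<eta> \<subseteq> {0..m}" "length \<eta> \<le> length w"
    and f: "norm f \<le> s * env m A (length \<eta>) w"
  shows "norm (c \<eta> j * f) \<le> (if set w \<subseteq> {0..m} \<and> j \<in> {1..m}
           then s * K * (max 1 Mc * A) ^ length w * fact (length w) else 0)"
proof (cases "set w \<subseteq> {0..m} \<and> j \<in> {1..m}")
  case True
  define n where "n = length w"
  have "norm (c \<eta> j * f) \<le> (K * Mc ^ length \<eta> * fact (length \<eta>)) * (s * (A ^ n * fact n / fact (length \<eta>)))"
    unfolding norm_mult
    using coeff_leD(1)[OF c \<eta>(1), of j] f True \<eta> K Mc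
    by (intro mult_mono) (auto simp: env_def n_def)
  also have "\<dots> = s * K * Mc ^ length \<eta> * A ^ n * fact n"
    by simp
  also have "\<dots> \<le> s * K * max 1 Mc ^ n * A ^ n * fact n"
  proof -
    have "Mc ^ length \<eta> \<le> max 1 Mc ^ length \<eta>"
      using Mc by (intro power_mono) auto
    also have "\<dots> \<le> max 1 Mc ^ n"
      using \<eta>(2) by (intro power_increasing) (auto simp: n_def)
    finally show ?thesis
      using s K A by (intro mult_right_mono mult_left_mono) auto
  qed
  finally show ?thesis
    using True by (simp add: n_def power_mult_distrib mult.assoc)
next
  case False
  then have "c \<eta> j = 0 \<or> f = 0"
  proof (cases "j \<in> {1..m}")
    case True
    with False have "env m A (length \<eta>) w = 0" by (simp add: env_def)
    with f show ?thesis by simp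
  qed (use coeff_leD(2)[OF c] in auto)
  then show ?thesis using False by auto
qed

lemma coeff_le_sum_words:
  fixes F :: "nat list \<Rightarrow> 'a::real_normed_field sser"
  assumes c: "coeff_le m K Mc c" and K: "0 \<le> K" and Mc: "0 < Mc" and A: "1 \<le> A" and s: "0 \<le> s"
    and F: "\<And>\<eta> v. set \<eta> \<subseteq> {0..m} \<Longrightarrow> norm (F \<eta> v) \<le> s * env m A (length \<eta>) v"
  shows "coeff_le m (s * K) (2 * (real m + 1) * max 1 Mc * A)
           (\<lambda>w j. \<Sum>\<eta>\<in>{\<eta>. set \<eta> \<subseteq> {0..m} \<and> length \<eta> \<le> length w}. c \<eta> j * F \<eta> w)"
  unfolding coeff_le_def
proof (intro allI)
  fix w :: "nat list" and j :: nat
  define T where "T = {\<eta>. set \<eta> \<subseteq> {0..m} \<and> length \<eta> \<le> length w}"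
  define b where "b = (if set w \<subseteq> {0..m} \<and> j \<in> {1..m}
                         then s * K * (max 1 Mc * A) ^ length w * fact (length w) else 0)"
  have "b \<ge> 0"
    using s K A Mc by (simp add: b_def)
  have "norm (\<Sum>\<eta>\<in>T. c \<eta> j * F \<eta> w) \<le> (\<Sum>\<eta>\<in>T. norm (c \<eta> j * F \<eta> w))"
    by (rule norm_sum)
  also have "\<dots> \<le> (\<Sum>\<eta>\<in>T. b)"
    unfolding b_def T_def
    by (intro sum_mono norm_coeff_mult_env_le[OF c K Mc A s] F) auto
  also have "\<dots> = real (card T) * b"
    by simp
  also have "\<dots> \<le> (2 * (real m + 1)) ^ length w * b"
    using card_words_le \<open>b \<ge> 0\<close> unfolding T_def by (intro mult_right_mono) auto
  also have "\<dots> = (if set w \<subseteq> {0..m} \<and> j \<in> {1..m}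
      then s * K * (2 * (real m + 1) * max 1 Mc * A) ^ length w * fact (length w) else 0)"
    unfolding b_def by (simp add: power_mult_distrib)
  finally show "norm (\<Sum>\<eta>\<in>T. c \<eta> j * F \<eta> w) \<le> \<dots>" .
qed

section \<open>The Silva topology\<close>

lemma norm_le_snorm:
  assumes "0 < M" "c \<in> EM m M"
  shows "norm (c w i) \<le> snorm M c * (M ^ length w * fact (length w))"
proof -
  from assms obtain K where K: "\<And>w i. norm (c w i) \<le> K * M ^ length w * fact (length w)"
    unfolding EM_def growth_bdd_def by blast
  have pos: "\<And>w. 0 < M ^ length w * fact (length w)" using assms by simp
  have "bdd_above {norm (c w i) / (M ^ length w * fact (length w)) |w i. True}"
  proof (rule bdd_aboveI)
    fix r assume "r \<in> {norm (c w i) / (M ^ length w * fact (length w)) |w i. True}"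
    then obtain w i where "r = norm (c w i) / (M ^ length w * fact (length w))" by blast
    then show "r \<le> K" using K[of w i] pos[of w] by (simp add: divide_le_eq mult.assoc)
  qed
  then have "norm (c w i) / (M ^ length w * fact (length w)) \<le> snorm M c"
    unfolding snorm_def by (rule cSup_upper[rotated]) blast
  then show ?thesis using pos[of w] by (simp add: divide_le_eq)
qed

lemma zero_nbhd_coordinate_ball:
  assumes \<rho>: "0 < \<rho>"
  shows "zero_nbhd m {v \<in> (LC m :: 'a::real_normed_field vser set). norm (v w i) < \<rho>}"
    (is "zero_nbhd m ?V")
  unfolding zero_nbhd_def
proof (intro conjI allI impI)
  show "absconv ?V"
    unfolding absconv_def
  proof (intro conjI allI impI)
    fix a :: 'a and v :: "'a vser" assume v: "v \<in> ?V" and a: "norm a \<le> 1"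
    have "norm (a * v w i) \<le> norm (v w i)"
      using a by (simp add: norm_mult mult_left_le_one_le)
    then show "smul a v \<in> ?V"
      using v LC_smul[of v m a] unfolding smul_def by auto
  next
    fix u v :: "'a vser" and l :: real
    assume u: "u \<in> ?V" and v: "v \<in> ?V" and l: "0 \<le> l" "l \<le> 1"
    have "norm (of_real l * u w i + of_real (1 - l) * v w i) \<le> l * norm (u w i) + (1 - l) * norm (v w i)"
      using l by (intro order.trans[OF norm_triangle_ineq]) (simp add: norm_mult del: of_real_diff)
    also have "\<dots> < l * \<rho> + (1 - l) * \<rho>"
      using u v l by (cases "l = 0") (auto intro!: add_less_le_mono mult_strict_left_mono mult_left_mono)
    also have "\<dots> = \<rho>"
      by (simp add: algebra_simps)
    finally have "norm ((smul (of_real l) u + smul (of_real (1 - l)) v) w i) < \<rho>"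
      by (simp add: smul_def del: of_real_diff)
    moreover have "smul (of_real l) u + smul (of_real (1 - l)) v \<in> LC m"
      using u v LC_add LC_smul by blast
    ultimately show "smul (of_real l) u + smul (of_real (1 - l)) v \<in> ?V"
      by blast
  qed
next
  fix M :: real assume M: "0 < M"
  have pos: "0 < M ^ length w * fact (length w)" using M by simp
  have "c \<in> ?V" if c: "c \<in> EM m M" "snorm M c < \<rho> / (M ^ length w * fact (length w))" for c
  proof -
    have "norm (c w i) \<le> snorm M c * (M ^ length w * fact (length w))"
      by (rule norm_le_snorm[OF M c(1)])
    also have "\<dots> < \<rho>"
      using c(2) pos by (simp add: pos_less_divide_eq)
    finally show "c \<in> ?V"
      using M c(1) unfolding LC_def by auto
  qed
  then show "\<exists>\<epsilon>>0. \<forall>c\<in>EM m M. snorm M c < \<epsilon> \<longrightarrow> c \<in> ?V"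
    using \<rho> pos by (intro exI[of _ "\<rho> / (M ^ length w * fact (length w))"]) auto
qed blast

lemma silva_open_coordinate_ball:
  fixes L :: "'a::real_normed_field vser"
  assumes r: "0 < r"
  shows "silva_open m {u \<in> LC m. norm (u w i - L w i) < r}"
  unfolding silva_open_def
proof (intro conjI ballI)
  fix u assume u: "u \<in> {u \<in> LC m. norm (u w i - L w i) < r}"
  define \<rho> where "\<rho> = r - norm (u w i - L w i)"
  have "0 < \<rho>" using u unfolding \<rho>_def by simp
  moreover have "u + v \<in> {u \<in> LC m. norm (u w i - L w i) < r}"
    if "v \<in> {v \<in> LC m. norm (v w i) < \<rho>}" for v
  proof -
    have "norm ((u + v) w i - L w i) \<le> norm (u w i - L w i) + norm (v w i)"
      using norm_triangle_ineq[of "u w i - L w i" "v w i"] by (simp add: algebra_simps)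
    also have "\<dots> < r" using that unfolding \<rho>_def by simp
    finally show ?thesis
      using LC_add[of u m v] u that by simp
  qed
  ultimately show "\<exists>V. zero_nbhd m V \<and> (\<forall>v\<in>V. u + v \<in> {u \<in> LC m. norm (u w i - L w i) < r})"
    using zero_nbhd_coordinate_ball by blast
qed blast

lemma silva_tendsto_unique:
  fixes f :: "'b \<Rightarrow> 'a::real_normed_field vser"
  assumes F: "F \<noteq> bot" and L1: "silva_tendsto m f L1 F" and L2: "silva_tendsto m f L2 F"
  shows "L1 = L2"
proof (rule ccontr)
  assume "L1 \<noteq> L2"
  then obtain w i where wi: "L1 w i \<noteq> L2 w i" by (meson ext)
  define r where "r = norm (L1 w i - L2 w i) / 2"
  have r: "0 < r" using wi unfolding r_def by simp
  have "eventually (\<lambda>t. f t \<in> {u \<in> LC m. norm (u w i - L w i) < r}) F"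
    if "silva_tendsto m f L F" for L
    using that silva_open_coordinate_ball[OF r, of m w i L] r unfolding silva_tendsto_def by auto
  from this[OF L1] this[OF L2] have "eventually (\<lambda>t. False) F"
  proof eventually_elim
    case (elim t)
    have "norm (L1 w i - L2 w i) \<le> norm (f t w i - L1 w i) + norm (f t w i - L2 w i)"
      using norm_triangle_ineq4[of "f t w i - L2 w i" "f t w i - L1 w i"]
      by (simp add: algebra_simps norm_minus_commute)
    also have "\<dots> < 2 * r" using elim by simp
    finally show False unfolding r_def by simp
  qed
  with F show False by (simp add: eventually_False)
qed

lemma silva_tendsto_eventually_const:
  assumes "L \<in> LC m" "eventually (\<lambda>t. f t = L) F"
  shows "silva_tendsto m f L F"
  using assms unfolding silva_tendsto_def by (auto elim: eventually_mono)

lemma silva_tendsto_coeff_le: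
  assumes L: "L \<in> LC m" and R: "0 < R" and C: "\<And>t. 0 \<le> C t" "(C \<longlongrightarrow> 0) F"
    and bound: "eventually (\<lambda>t. coeff_le m (C t) R (f t - L)) F"
  shows "silva_tendsto m f L F"
  unfolding silva_tendsto_def
proof (intro conjI allI impI)
  fix U assume "silva_open m U" "L \<in> U"
  then obtain V where V: "zero_nbhd m V" "\<forall>v\<in>V. L + v \<in> U"
    unfolding silva_open_def by blast
  then obtain \<epsilon> where "0 < \<epsilon>" and \<epsilon>: "\<forall>z\<in>EM m R. snorm R z < \<epsilon> \<longrightarrow> z \<in> V"
    unfolding zero_nbhd_def using R by blast
  from order_tendstoD(2)[OF C(2) \<open>0 < \<epsilon>\<close>] bound
  show "eventually (\<lambda>t. f t \<in> U) F"
  proof eventually_elim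
    case (elim t)
    have "f t - L \<in> EM m R" "snorm R (f t - L) \<le> C t"
      using coeff_le_EM[OF R C(1) elim(2)] by auto
    with elim(1) \<epsilon> have "f t - L \<in> V"
      by auto
    then show "f t \<in> U"
      using V(2) by force
  qed
qed (rule L)

section \<open>Left-invariant vector fields and their bracket\<close>

lemma prelie_LC:
  assumes "x \<in> LC m" "c \<in> LC m"
  shows "prelie m c x \<in> LC m"
proof -
  obtain M B where M: "0 < M" and B: "0 \<le> B" and x: "coeff_le m B M x"
    using assms(1) unfolding LC_iff_coeff_le by blast
  obtain Mc K where Mc: "0 < Mc" and K: "0 \<le> K" and c: "coeff_le m K Mc c"
    using assms(2) unfolding LC_iff_coeff_le by blast
  define A where "A = 2 * M + 1 + 2 * B"
  have A: "2 * M \<le> A" "1 + 2 * B \<le> A" "1 \<le> A"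
    using B M unfolding A_def by auto
  have "coeff_le m (2 * K) (2 * (real m + 1) * max 1 Mc * A) (prelie m c x)"
    unfolding prelie_def
    by (rule coeff_le_sum_words[OF c K Mc A(3) _ norm_wpl_le[OF x B M A(1,2)]]) simp_all
  moreover have "0 < 2 * (real m + 1) * max 1 Mc * A"
    using A by simp
  ultimately show ?thesis
    unfolding LC_iff_coeff_le using K by (meson mult_nonneg_nonneg zero_le_numeral)
qed

lemma gprod_difference_quotient:
  fixes c x :: "'a::field vser"
  assumes "t \<noteq> 0"
  shows "smul (inverse t) (gprod m c (0 + smul t x) - gprod m c 0) - (x + prelie m c x) =
    (\<lambda>w j. \<Sum>\<eta>\<in>{\<eta>. set \<eta> \<subseteq> {0..m} \<and> length \<eta> \<le> length w}.
       c \<eta> j * (inverse t * (phiw (smul t x) \<eta> (chr []) w - chr \<eta> w - t * wpl x \<eta> w)))"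
proof (intro ext)
  fix w :: "nat list" and j :: nat
  define T where "T = {\<eta>. set \<eta> \<subseteq> {0..m} \<and> length \<eta> \<le> length w}"
  have "(smul (inverse t) (gprod m c (0 + smul t x) - gprod m c 0) - (x + prelie m c x)) w j
      = inverse t * (t * x w j + (\<Sum>\<eta>\<in>T. c \<eta> j * phiw (smul t x) \<eta> (chr []) w)
          - (\<Sum>\<eta>\<in>T. c \<eta> j * chr \<eta> w)) - (x w j + (\<Sum>\<eta>\<in>T. c \<eta> j * wpl x \<eta> w))"
    by (simp add: smul_def gprod_def mixcomp_def prelie_def phiw_zero T_def)
  also have "\<dots> = inverse t * (\<Sum>\<eta>\<in>T. c \<eta> j * phiw (smul t x) \<eta> (chr []) w)
      - inverse t * (\<Sum>\<eta>\<in>T. c \<eta> j * chr \<eta> w) - (\<Sum>\<eta>\<in>T. c \<eta> j * wpl x \<eta> w)"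
    using assms by (simp add: field_simps)
  also have "\<dots> = (\<Sum>\<eta>\<in>T. inverse t * (c \<eta> j * phiw (smul t x) \<eta> (chr []) w)
        - inverse t * (c \<eta> j * chr \<eta> w) - c \<eta> j * wpl x \<eta> w)"
    by (simp add: sum_subtractf sum_distrib_left)
  also have "\<dots> = (\<Sum>\<eta>\<in>T. c \<eta> j * (inverse t * (phiw (smul t x) \<eta> (chr []) w - chr \<eta> w - t * wpl x \<eta> w)))"
    using assms by (intro sum.cong refl) (simp add: field_simps)
  finally show "(smul (inverse t) (gprod m c (0 + smul t x) - gprod m c 0) - (x + prelie m c x)) w j
      = (\<Sum>\<eta>\<in>T. c \<eta> j * (inverse t * (phiw (smul t x) \<eta> (chr []) w - chr \<eta> w - t * wpl x \<eta> w)))" .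
qed



lemma dirderiv_gprod:
  fixes x c :: "'a::real_normed_field vser"
  assumes x: "x \<in> LC m" and c: "c \<in> LC m"
  shows "dirderiv m (gprod m c) 0 x (x + prelie m c x)"
proof -
  obtain M B where M: "0 < M" and B: "0 \<le> B" and xb: "coeff_le m B M x"
    using x unfolding LC_iff_coeff_le by blast
  obtain Mc K where Mc: "0 < Mc" and K: "0 \<le> K" and cb: "coeff_le m K Mc c"
    using c unfolding LC_iff_coeff_le by blast
  define A where "A = 2 * M + 1 + 2 * B"
  have A: "2 * M \<le> A" "1 + 2 * B \<le> A" "1 \<le> A"
    using B M unfolding A_def by auto
  define R where "R = 2 * (real m + 1) * max 1 Mc * A"
  have "0 < R"
    using A unfolding R_def by simp
  have "coeff_le m (norm t * K) R
      (smul (inverse t) (gprod m c (0 + smul t x) - gprod m c 0) - (x + prelie m c x))"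
    if t: "t \<noteq> 0" "norm t < 1" for t
    unfolding gprod_difference_quotient[OF t(1)] R_def using t
    by (intro coeff_le_sum_words[OF cb K Mc A(3)] norm_phiw_remainder_quotient_le[OF xb B M A(1,2)])
      auto
  moreover have "\<forall>\<^sub>F t in at 0. t \<noteq> 0 \<and> norm (t :: 'a) < 1"
    by (auto simp: eventually_at intro!: exI[of _ 1])
  ultimately show ?thesis
    unfolding dirderiv_def
    by (intro silva_tendsto_coeff_le[OF LC_add[OF x prelie_LC[OF x c]] \<open>0 < R\<close>,
          where C = "\<lambda>t. norm t * K"] tendsto_mult_left_zero tendsto_norm_zero tendsto_ident_at)
      (auto simp: K elim: eventually_mono)
qed

lemma is_livf_prelie: "x \<in> LC m \<Longrightarrow> is_livf m x (\<lambda>c. x + prelie m c x)"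
  unfolding is_livf_def by (blast intro: dirderiv_gprod)

lemma dirderiv_unique:
  fixes f :: "'a::real_normed_field vser \<Rightarrow> 'a vser"
  shows "dirderiv m f p v a \<Longrightarrow> dirderiv m f p v b \<Longrightarrow> a = b"
  unfolding dirderiv_def by (rule silva_tendsto_unique[OF at_neq_bot])

lemma is_livf_apply:
  assumes "x \<in> LC m" "is_livf m x X" "c \<in> LC m"
  shows "X c = x + prelie m c x"
  using assms dirderiv_unique dirderiv_gprod unfolding is_livf_def by blast

lemma prelie_smul: "prelie m (smul a c) d = smul a (prelie m c d)"
  by (intro ext) (simp add: prelie_def smul_def sum_distrib_left mult.assoc)

lemma prelie_zero: "prelie m 0 d = 0"
  by (intro ext) (simp add: prelie_def)

text \<open>\<open>Y\<close> is affine in the chart, so its difference quotient at \<open>\<delta>\<close> along \<open>X(\<delta>) = x\<close> is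
  constant.\<close>
lemma dirderiv_livf:
  assumes x: "x \<in> LC m" and y: "y \<in> LC m" and X: "is_livf m x X" and Y: "is_livf m y Y"
  shows "dirderiv m Y 0 (X 0) (prelie m x y)"
  unfolding dirderiv_def
proof (rule silva_tendsto_eventually_const)
  show "prelie m x y \<in> LC m"
    by (rule prelie_LC[OF y x])
  have X0: "X 0 = x" and Y0: "Y 0 = y"
    using is_livf_apply[OF x X LC_zero] is_livf_apply[OF y Y LC_zero] by (simp_all add: prelie_zero)
  have "smul (inverse t) (Y (0 + smul t (X 0)) - Y 0) = prelie m x y" if "t \<noteq> 0" for t
  proof -
    have "Y (0 + smul t (X 0)) = y + smul t (prelie m x y)"
      using is_livf_apply[OF y Y LC_smul[OF x]] by (simp add: X0 prelie_smul)
    then show ?thesis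
      using that by (intro ext) (simp add: Y0 smul_def)
  qed
  then show "\<forall>\<^sub>F t in at 0. smul (inverse t) (Y (0 + smul t (X 0)) - Y 0) = prelie m x y"
    by (auto simp: eventually_at_filter)
qed

theorem corollary5p6:
  fixes m :: nat and x y :: "'a::real_normed_field vser"
  assumes "x \<in> LC m" and "y \<in> LC m"
  shows "(\<exists>X Y. is_livf m x X \<and> is_livf m y Y) \<and>
         (\<forall>X Y. is_livf m x X \<longrightarrow> is_livf m y Y \<longrightarrow>
            (\<exists>a b. dirderiv m Y 0 (X 0) a \<and> dirderiv m X 0 (Y 0) b) \<and>
            (\<forall>a b. dirderiv m Y 0 (X 0) a \<longrightarrow> dirderiv m X 0 (Y 0) b \<longrightarrow>
                a - b = prelie m x y - prelie m y x))"
proof (intro conjI allI impI)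
  show "\<exists>X Y. is_livf m x X \<and> is_livf m y Y"
    using is_livf_prelie[OF assms(1)] is_livf_prelie[OF assms(2)] by blast
next
  fix X Y assume X: "is_livf m x X" and Y: "is_livf m y Y"
  have xy: "dirderiv m Y 0 (X 0) (prelie m x y)" and yx: "dirderiv m X 0 (Y 0) (prelie m y x)"
    using dirderiv_livf[OF assms X Y] dirderiv_livf[OF assms(2,1) Y X] .
  then show "\<exists>a b. dirderiv m Y 0 (X 0) a \<and> dirderiv m X 0 (Y 0) b"
    by blast
  fix a b assume "dirderiv m Y 0 (X 0) a" "dirderiv m X 0 (Y 0) b"
  with xy yx show "a - b = prelie m x y - prelie m y x"
    using dirderiv_unique by metis
qed

end
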